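(* $\mathrm{conv}\sqsubseteq\mathcal{BI}\sqsubseteq\mathrm{Fin}^2$, while $\mathcal{BI}\not\sqsubseteq\mathrm{conv}$ and $\mathrm{Fin}^2\not\sqsubseteq\mathcal{BI}$.
   Context: An ideal on an infinite countable set $X$ is a family $\mathcal{I}\subseteq\mathcal{P}(X)$ closed under subsets and finite unions, containing all finite subsets, with $X\notin\mathcal{I}$. $\mathrm{conv}$ is the ideal on $\mathbb{Q}\cap[0,1]$ generated by the ranges of sequences in $\mathbb{Q}\cap[0,1]$ that converge in $[0,1]$ (i.e., $A\in\mathrm{conv}$ iff $A$ is covered by finitely many such ranges). $\mathrm{Fin}^2$: ideal on $\omega^2$ of all $A$ with only finitely many $n$ such that $\{m:(n,m)\in A\}$ is infinite. $\mathcal{BI}$: ideal on $\omega^3$ of all $A$ for which there is $k$ with $\{(j,l):(i,j,l)\in A\}\in\mathrm{Fin}^2$ for $i<k$ and finite for $i\ge k$. $\mathcal{I}\sqsubseteq\mathcal{J}$: there is a bijection $f:\bigcup\mathcal{J}\to\bigcup\mathcal{I}$ with $f^{-1}[A]\in\mathcal{J}$ for all $A\in\mathcal{I}$. *)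

theory Defs
  imports Complex_Main
begin

definition ideal_below :: "'a set set \<Rightarrow> 'b set set \<Rightarrow> bool" where
  "ideal_below I J \<longleftrightarrow>
     (\<exists>f. bij_betw f (\<Union>J) (\<Union>I) \<and> (\<forall>A\<in>I. f -` A \<inter> \<Union>J \<in> J))"

definition Q01 :: "rat set" where
  "Q01 = {q. 0 \<le> q \<and> q \<le> 1}"

text \<open>conv: subsets of Q cap [0,1] covered by finitely many ranges of sequences
  in Q cap [0,1] converging in [0,1] (the limit lies in [0,1] automatically).\<close>
definition conv :: "rat set set" where
  "conv = {A. \<exists>F :: (nat \<Rightarrow> rat) set. finite F \<and>
       (\<forall>s\<in>F. range s \<subseteq> Q01 \<and> convergent (\<lambda>n. real_of_rat (s n))) \<and>
       A \<subseteq> \<Union>(range ` F)}"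

definition Fin2 :: "(nat \<times> nat) set set" where
  "Fin2 = {A. finite {n. infinite {m. (n, m) \<in> A}}}"

definition BI :: "(nat \<times> nat \<times> nat) set set" where
  "BI = {A. \<exists>k. (\<forall>i<k. {(j, l). (i, j, l) \<in> A} \<in> Fin2) \<and>
                 (\<forall>i\<ge>k. finite {(j, l). (i, j, l) \<in> A})}"

end

theory Submission
  imports Defs "HOL-Library.Countable_Set" "HOL-Library.Nat_Bijection"
begin

text \<open>
  Split (0,1] harmonically into the intervals I_i = (1/(i+2), 1/(i+1)] and each I_i harmonically
  again into intervals I_ij. Both families are point-finite: a real number lies in the closure of
  only finitely many members. A set in conv is covered by finitely many convergent sequences, and a
  sequence with infinitely many terms in an interval has its limit in the closure, so a set in conv
  meets only finitely many I_i, and inside each I_i only finitely many I_ij, in an infinite set.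
  Hence a bijection from omega^3 onto the rationals of [0,1] taking {i} x {j} x omega onto the
  rationals of I_ij pulls conv back into BI. Coding the first two coordinates of omega^3 into one
  gives BI below Fin2.

  The negative results use diagonal sets {b m t | t \<le> m} in which b m t lies in the t-th cell
  and has level at least m. Every level then contains only finitely many points, which puts the
  image of the diagonal set into the smaller ideal, while every cell contains infinitely many
  points, which the pullback cannot afford (a set in conv, resp. the slice k of a set in BI). For
  BI not below conv the level is the first coordinate of the image; if that coordinate is bounded
  on some I_t, the second coordinate is used on the cells I_tj instead, where points of high level
  exist because no set in conv contains an interval.
\<close>

section \<open>Harmonic cells\<close>

definition cell_lo :: "rat \<Rightarrow> rat \<Rightarrow> nat \<Rightarrow> rat" where
  "cell_lo c d j = c + (d - c) / (of_nat j + 2)"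

definition cell_hi :: "rat \<Rightarrow> rat \<Rightarrow> nat \<Rightarrow> rat" where
  "cell_hi c d j = c + (d - c) / (of_nat j + 1)"

definition cell :: "rat \<Rightarrow> rat \<Rightarrow> nat \<Rightarrow> rat set" where
  "cell c d j = {cell_lo c d j<..cell_hi c d j}"

text \<open>The cells partition (c,d] and accumulate only at c: q lies in cell c d j iff
  j + 1 \<le> (d - c) / (q - c) < j + 2, whence the formula for the index.\<close>

definition cell_index :: "rat \<Rightarrow> rat \<Rightarrow> rat \<Rightarrow> nat" where
  "cell_index c d q = nat \<lfloor>(d - c) / (q - c)\<rfloor> - 1"

lemma cell_bounds:
  assumes "c < d"
  shows "c < cell_lo c d j" "cell_lo c d j < cell_hi c d j" "cell_hi c d j \<le> d"
  using assms unfolding cell_lo_def cell_hi_def by (auto simp: field_simps intro: mult_right_mono)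

lemma cell_subset: "c < d \<Longrightarrow> cell c d j \<subseteq> {c<..d}"
  using cell_bounds[of c d j] unfolding cell_def by auto

lemma cell_subset_closed: "cell c d j \<subseteq> {cell_lo c d j..cell_hi c d j}"
  unfolding cell_def by auto

lemma infinite_cell: "c < d \<Longrightarrow> infinite (cell c d j)"
  using cell_bounds[of c d j] unfolding cell_def by simp

lemma cell_index_eq_iff:
  assumes "q \<in> {c<..d}"
  shows "cell_index c d q = j \<longleftrightarrow> q \<in> cell c d j"
proof -
  define r where "r = (d - c) / (q - c)"
  have qc: "q - c > 0" using assms by simp
  have "1 \<le> r" unfolding r_def using assms by (simp add: field_simps)
  have lo: "cell_lo c d j < q \<longleftrightarrow> r < of_nat j + 2"
    unfolding cell_lo_def r_def using qc by (simp add: field_simps)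
  have hi: "q \<le> cell_hi c d j \<longleftrightarrow> of_nat j + 1 \<le> r"
    unfolding cell_hi_def r_def using qc by (simp add: field_simps)
  have "cell_index c d q = j \<longleftrightarrow> \<lfloor>r\<rfloor> = int j + 1"
    unfolding cell_index_def r_def[symmetric] using \<open>1 \<le> r\<close> by linarith
  also have "\<dots> \<longleftrightarrow> of_nat j + 1 \<le> r \<and> r < of_nat j + 2"
    using floor_eq_iff[of r "int j + 1"] by (simp add: add.commute)
  also have "\<dots> \<longleftrightarrow> q \<in> cell c d j"
    using lo hi unfolding cell_def greaterThanAtMost_iff by blast
  finally show ?thesis .
qed

definition point_finite :: "('w \<Rightarrow> rat) \<Rightarrow> ('w \<Rightarrow> rat) \<Rightarrow> bool" where
  "point_finite l h \<longleftrightarrow>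
     (\<forall>x::real. finite {w. real_of_rat (l w) \<le> x \<and> x \<le> real_of_rat (h w)})"

lemma point_finite_cells:
  assumes "c < d"
  shows "point_finite (cell_lo c d) (cell_hi c d)"
  unfolding point_finite_def
proof
  fix x :: real
  define c' e where "c' = real_of_rat c" and "e = real_of_rat (d - c)"
  have "e > 0" unfolding e_def using assms by simp
  have "{j. real_of_rat (cell_lo c d j) \<le> x \<and> x \<le> real_of_rat (cell_hi c d j)}
      \<subseteq> {..nat \<lceil>e / (x - c')\<rceil>}"
  proof
    fix j
    assume "j \<in> {j. real_of_rat (cell_lo c d j) \<le> x \<and> x \<le> real_of_rat (cell_hi c d j)}"
    then have "c' + e / (real j + 2) \<le> x" and "x \<le> c' + e / (real j + 1)"
      unfolding cell_lo_def cell_hi_def c'_def e_def by (simp_all add: of_rat_add of_rat_divide)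
    moreover have "0 < e / (real j + 2)" using \<open>e > 0\<close> by simp
    ultimately have "c' < x" and "x - c' \<le> e / (real j + 1)" by linarith+
    then have "real j * (x - c') \<le> e"
      by (simp add: le_divide_eq algebra_simps)
    then have "real j \<le> e / (x - c')"
      using \<open>c' < x\<close> by (simp add: le_divide_eq)
    then show "j \<in> {..nat \<lceil>e / (x - c')\<rceil>}"
      by (meson atMost_iff of_nat_le_iff order_trans real_nat_ceiling_ge)
  qed
  then show "finite {j. real_of_rat (cell_lo c d j) \<le> x \<and> x \<le> real_of_rat (cell_hi c d j)}"
    by (rule finite_subset) simp
qed

section \<open>Convergent sequences and point-finite families\<close>

lemma limit_in_closed_if_infinitely_often:
  assumes "X \<longlonglongrightarrow> L" and "closed S" and "infinite {n. X n \<in> S}"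
  shows "L \<in> S"
proof -
  obtain r :: "nat \<Rightarrow> nat" where "strict_mono r" and "\<And>n. X (r n) \<in> S"
    using infinite_enumerate[OF assms(3)] by auto
  then show ?thesis
    using closed_sequentially[OF assms(2), of "X \<circ> r"] LIMSEQ_subseq_LIMSEQ[OF assms(1)] by simp
qed

lemma convI:
  assumes "finite F" and "\<And>s. s \<in> F \<Longrightarrow> range s \<subseteq> Q01"
    and "\<And>s. s \<in> F \<Longrightarrow> convergent (\<lambda>n. real_of_rat (s n))" and "A \<subseteq> \<Union>(range ` F)"
  shows "A \<in> conv"
  unfolding conv_def mem_Collect_eq using assms by (intro exI[of _ F]) simp

lemma convE:
  assumes "A \<in> conv"
  obtains F :: "(nat \<Rightarrow> rat) set" where "finite F" and "\<And>s. s \<in> F \<Longrightarrow> range s \<subseteq> Q01"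
    and "\<And>s. s \<in> F \<Longrightarrow> convergent (\<lambda>n. real_of_rat (s n))" and "A \<subseteq> \<Union>(range ` F)"
proof -
  from assms obtain F :: "(nat \<Rightarrow> rat) set" where "finite F \<and>
      (\<forall>s\<in>F. range s \<subseteq> Q01 \<and> convergent (\<lambda>n. real_of_rat (s n))) \<and> A \<subseteq> \<Union>(range ` F)"
    unfolding conv_def mem_Collect_eq by (elim exE)
  then show ?thesis using that by blast
qed

lemma conv_subset: "A \<in> conv \<Longrightarrow> B \<subseteq> A \<Longrightarrow> B \<in> conv"
  by (erule convE, rule convI) auto

lemma Union_conv: "\<Union>conv = Q01"
proof
  show "\<Union>conv \<subseteq> Q01"
  proof
    fix q assume "q \<in> \<Union>conv"
    then obtain A where "q \<in> A" and "A \<in> conv" by blast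
    from \<open>A \<in> conv\<close> show "q \<in> Q01"
      by (rule convE) (use \<open>q \<in> A\<close> in blast)
  qed
  show "Q01 \<subseteq> \<Union>conv"
  proof
    fix q assume "q \<in> Q01"
    then have "{q} \<in> conv" by (intro convI[of "{\<lambda>_. q}"]) (auto simp: convergent_const)
    then show "q \<in> \<Union>conv" by blast
  qed
qed

lemma conv_finitely_many_infinite_traces:
  fixes T :: "'w \<Rightarrow> rat set"
  assumes "A \<in> conv" and "point_finite l h" and T: "\<And>w. T w \<subseteq> {l w..h w}"
  shows "finite {w. infinite (A \<inter> T w)}"
proof -
  obtain F :: "(nat \<Rightarrow> rat) set" where "finite F"
    and convergent: "\<And>s. s \<in> F \<Longrightarrow> convergent (\<lambda>n. real_of_rat (s n))" and "A \<subseteq> \<Union>(range ` F)"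
    using assms(1) by (elim convE) blast
  define Lim where "Lim s = lim (\<lambda>n. real_of_rat (s n))" for s :: "nat \<Rightarrow> rat"
  have "\<exists>s\<in>F. Lim s \<in> {real_of_rat (l w)..real_of_rat (h w)}" if "infinite (A \<inter> T w)" for w
  proof -
    have "A \<inter> T w \<subseteq> (\<Union>s\<in>F. s ` {n. s n \<in> T w})"
      using \<open>A \<subseteq> \<Union>(range ` F)\<close> by blast
    then have "infinite (\<Union>s\<in>F. s ` {n. s n \<in> T w})"
      using that by (meson finite_subset)
    then obtain s where "s \<in> F" and "infinite (s ` {n. s n \<in> T w})"
      using \<open>finite F\<close> by blast
    then have "infinite {n. s n \<in> T w}"
      by (meson finite_imageI)
    moreover have "{n. s n \<in> T w} \<subseteq> {n. real_of_rat (s n) \<in> {real_of_rat (l w)..real_of_rat (h w)}}"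
      using T[of w] by (force simp: of_rat_less_eq)
    ultimately have inf: "infinite {n. real_of_rat (s n) \<in> {real_of_rat (l w)..real_of_rat (h w)}}"
      by (meson finite_subset)
    have "(\<lambda>n. real_of_rat (s n)) \<longlonglongrightarrow> Lim s"
      using convergent[OF \<open>s \<in> F\<close>] unfolding Lim_def by (simp add: convergent_LIMSEQ_iff)
    from limit_in_closed_if_infinitely_often[OF this closed_atLeastAtMost inf]
    show ?thesis using \<open>s \<in> F\<close> by blast
  qed
  then have "{w. infinite (A \<inter> T w)}
      \<subseteq> (\<Union>s\<in>F. {w. real_of_rat (l w) \<le> Lim s \<and> Lim s \<le> real_of_rat (h w)})"
    by auto
  moreover have "finite (\<Union>s\<in>F. {w. real_of_rat (l w) \<le> Lim s \<and> Lim s \<le> real_of_rat (h w)})"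
    using \<open>finite F\<close> assms(2) unfolding point_finite_def by blast
  ultimately show ?thesis by (rule finite_subset)
qed

lemma conv_avoids_interval:
  assumes "a < b" and "Z \<in> conv"
  shows "\<exists>q\<in>{a<..b}. q \<notin> Z"
proof -
  have "finite {j. infinite (Z \<inter> cell a b j)}"
    by (rule conv_finitely_many_infinite_traces[OF assms(2) point_finite_cells[OF assms(1)]
          cell_subset_closed])
  then obtain j where "finite (Z \<inter> cell a b j)"
    using ex_new_if_finite[OF infinite_UNIV_nat] by blast
  then have "\<not> cell a b j \<subseteq> Z"
    using infinite_cell[OF assms(1)] by (metis Int_absorb1 Int_commute)
  then show ?thesis using cell_subset[OF assms(1)] by blast
qed

section \<open>conv below BI below Fin2\<close>

lemma Fin2I: "(\<And>n. finite {m. (n, m) \<in> A}) \<Longrightarrow> A \<in> Fin2"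
  unfolding Fin2_def by simp

lemma UNIV_not_in_Fin2: "UNIV \<notin> Fin2"
  unfolding Fin2_def by simp

lemma Union_Fin2: "\<Union>Fin2 = UNIV"
proof -
  have "{x} \<in> Fin2" for x :: "nat \<times> nat"
    by (rule Fin2I) (rule finite_subset[of _ "{snd x}"], auto)
  then show ?thesis by blast
qed

lemma BI_I:
  assumes "\<And>i. i < k \<Longrightarrow> {(j, l). (i, j, l) \<in> A} \<in> Fin2"
    and "\<And>i. k \<le> i \<Longrightarrow> finite {(j, l). (i, j, l) \<in> A}"
  shows "A \<in> BI"
proof -
  have "(\<forall>i<k. {(j, l). (i, j, l) \<in> A} \<in> Fin2) \<and> (\<forall>i\<ge>k. finite {(j, l). (i, j, l) \<in> A})"
    using assms by blast
  then show ?thesis unfolding BI_def by (intro CollectI exI)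
qed

lemma BI_E:
  assumes "A \<in> BI"
  obtains k where "\<And>i. i < k \<Longrightarrow> {(j, l). (i, j, l) \<in> A} \<in> Fin2"
    and "\<And>i. k \<le> i \<Longrightarrow> finite {(j, l). (i, j, l) \<in> A}"
  using assms unfolding BI_def by auto

lemma Union_BI: "\<Union>BI = UNIV"
proof -
  have "{(j, l). (i, j, l) \<in> {x}} \<subseteq> {snd x}" for i and x :: "nat \<times> nat \<times> nat"
    by auto
  then have "{x} \<in> BI" for x :: "nat \<times> nat \<times> nat"
    by (intro BI_I[of 0]) (auto intro: finite_subset)
  then show ?thesis by blast
qed

text \<open>The point 0 lies in no cell; the two indices put it into some box with junk values, which
  is harmless because only infinite intersections with boxes matter.\<close>

definition coarse_index :: "rat \<Rightarrow> nat" where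
  "coarse_index q = cell_index 0 1 q"

definition fine_index :: "rat \<Rightarrow> nat" where
  "fine_index q = cell_index (cell_lo 0 1 (coarse_index q)) (cell_hi 0 1 (coarse_index q)) q"

definition strip :: "nat \<Rightarrow> rat set" where
  "strip i = {q \<in> Q01. coarse_index q = i}"

definition box :: "nat \<Rightarrow> nat \<Rightarrow> rat set" where
  "box i j = {q \<in> strip i. fine_index q = j}"

lemma strip_minus_zero: "strip i - {0} = cell 0 1 i"
proof -
  have "q \<in> strip i - {0} \<longleftrightarrow> q \<in> cell 0 1 i" for q
  proof (cases "q \<in> {0<..1}")
    case True
    then show ?thesis
      using cell_index_eq_iff[OF True] unfolding strip_def coarse_index_def Q01_def by auto
  next
    case False
    then show ?thesis
      using cell_subset[of 0 1 i] unfolding strip_def Q01_def by auto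
  qed
  then show ?thesis by blast
qed

lemma box_minus_zero: "box i j - {0} = cell (cell_lo 0 1 i) (cell_hi 0 1 i) j"
proof -
  have "q \<in> box i j - {0} \<longleftrightarrow> q \<in> cell (cell_lo 0 1 i) (cell_hi 0 1 i) j" for q
  proof (cases "q \<in> cell 0 1 i")
    case True
    then have "coarse_index q = i" using strip_minus_zero[of i] unfolding strip_def by blast
    moreover have "q \<in> {cell_lo 0 1 i<..cell_hi 0 1 i}" using True unfolding cell_def .
    ultimately show ?thesis
      using True strip_minus_zero[of i] cell_index_eq_iff
      unfolding box_def fine_index_def by auto
  next
    case False
    moreover have "cell (cell_lo 0 1 i) (cell_hi 0 1 i) j \<subseteq> cell 0 1 i"
      using cell_subset[OF cell_bounds(2)[OF zero_less_one]] unfolding cell_def[of 0 1 i] .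
    ultimately show ?thesis
      using strip_minus_zero[of i] unfolding box_def by blast
  qed
  then show ?thesis by blast
qed

lemma infinite_box: "infinite (box i j)"
  using infinite_cell[OF cell_bounds(2)[OF zero_less_one]] box_minus_zero[of i j]
  by (metis finite_Diff)

lemma conv_finitely_many_infinite_strips:
  assumes "A \<in> conv"
  shows "finite {i. infinite (A \<inter> strip i)}"
proof -
  have "finite {i. infinite (A \<inter> cell 0 1 i)}"
    by (rule conv_finitely_many_infinite_traces[OF assms point_finite_cells[OF zero_less_one]
          cell_subset_closed])
  moreover have "A \<inter> cell 0 1 i = A \<inter> strip i - {0}" for i
    using strip_minus_zero[of i] by blast
  ultimately show ?thesis by simp
qed

lemma conv_finitely_many_infinite_boxes:
  assumes "A \<in> conv"
  shows "finite {j. infinite (A \<inter> box i j)}"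
proof -
  have "finite {j. infinite (A \<inter> cell (cell_lo 0 1 i) (cell_hi 0 1 i) j)}"
    by (rule conv_finitely_many_infinite_traces[OF assms point_finite_cells cell_subset_closed])
      (rule cell_bounds(2)[OF zero_less_one])
  moreover have "A \<inter> cell (cell_lo 0 1 i) (cell_hi 0 1 i) j = A \<inter> box i j - {0}" for j
    using box_minus_zero[of i j] by blast
  ultimately show ?thesis by simp
qed

lemma bij_betw_infinite_fibres:
  assumes "countable S" and "\<And>i. infinite {x \<in> S. \<phi> x = i}"
  obtains g :: "'i \<times> nat \<Rightarrow> 'a" where "bij_betw g UNIV S" and "\<And>i n. \<phi> (g (i, n)) = i"
proof -
  define g :: "'i \<times> nat \<Rightarrow> 'a" where "g = (\<lambda>(i, n). from_nat_into {x \<in> S. \<phi> x = i} n)"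
  have fibre: "bij_betw (\<lambda>n. g (i, n)) UNIV {x \<in> S. \<phi> x = i}" for i
    unfolding g_def using assms by (auto intro: bij_betw_from_nat_into countable_subset[of _ S])
  then have \<phi>: "\<phi> (g (i, n)) = i" and "g (i, n) \<in> S" for i n
    by (blast dest: bij_betwE)+
  have "inj g"
  proof (rule injI)
    fix x y assume "g x = g y"
    moreover obtain i n i' n' where "x = (i, n)" and "y = (i', n')" by fastforce
    moreover from calculation have "i = i'" using \<phi> by metis
    ultimately show "x = y" using fibre[of i] by (auto simp: bij_betw_def inj_def)
  qed
  moreover have "S \<subseteq> range g"
  proof
    fix x assume "x \<in> S"
    then have "x \<in> range (\<lambda>n. g (\<phi> x, n))"
      using bij_betw_imp_surj_on[OF fibre[of "\<phi> x"]] by blast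
    then show "x \<in> range g" by blast
  qed
  ultimately have "bij_betw g UNIV S"
    using \<open>\<And>i n. g (i, n) \<in> S\<close> by (auto simp: bij_betw_def)
  then show ?thesis using that \<phi> by blast
qed

lemma conv_preimage_in_BI:
  assumes "inj g" and g_box: "\<And>i j l. g ((i, j), l) \<in> box i j" and "A \<in> conv"
  shows "(\<lambda>(i, j, l). g ((i, j), l)) -` A \<in> BI"
proof -
  have column: "finite {l. g ((i, j), l) \<in> A}" if "finite (A \<inter> box i j)" for i j
  proof -
    have "{l. g ((i, j), l) \<in> A} = (\<lambda>l. g ((i, j), l)) -` (A \<inter> box i j)"
      using g_box by auto
    moreover have "inj (\<lambda>l. g ((i, j), l))" using \<open>inj g\<close> by (simp add: inj_def)
    ultimately show ?thesis using finite_vimageI[OF that] by metis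
  qed
  have slice: "finite {(j, l). g ((i, j), l) \<in> A}" if "finite (A \<inter> strip i)" for i
  proof -
    have "{(j, l). g ((i, j), l) \<in> A} = (\<lambda>(j, l). g ((i, j), l)) -` (A \<inter> strip i)"
      using g_box unfolding box_def by auto
    moreover have "inj (\<lambda>(j, l). g ((i, j), l))" using \<open>inj g\<close> by (auto simp: inj_def)
    ultimately show ?thesis using finite_vimageI[OF that] by metis
  qed
  have "{(j, l). g ((i, j), l) \<in> A} \<in> Fin2" for i
  proof -
    have "{j. infinite {l. g ((i, j), l) \<in> A}} \<subseteq> {j. infinite (A \<inter> box i j)}"
      using column by blast
    then show ?thesis
      unfolding Fin2_def using conv_finitely_many_infinite_boxes[OF \<open>A \<in> conv\<close>, of i]
      by (auto intro: finite_subset)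
  qed
  moreover obtain k where "{i. infinite (A \<inter> strip i)} \<subseteq> {..<k}"
    using finite_nat_bounded[OF conv_finitely_many_infinite_strips[OF \<open>A \<in> conv\<close>]] ..
  ultimately show ?thesis
    by (intro BI_I[of k]) (auto intro: slice)
qed

lemma conv_below_BI: "ideal_below conv BI"
proof -
  obtain g :: "(nat \<times> nat) \<times> nat \<Rightarrow> rat" where g: "bij_betw g UNIV Q01"
    and indices: "\<And>i j l. (coarse_index (g ((i, j), l)), fine_index (g ((i, j), l))) = (i, j)"
  proof (rule bij_betw_infinite_fibres[of Q01 "\<lambda>q. (coarse_index q, fine_index q)"])
    show "infinite {q \<in> Q01. (coarse_index q, fine_index q) = p}" for p
      using infinite_box[of "fst p" "snd p"] unfolding box_def strip_def by (simp add: prod_eq_iff)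
  qed (auto simp: countableI_type)
  have g_box: "g ((i, j), l) \<in> box i j" for i j l
    using indices[of i j l] bij_betwE[OF g] unfolding box_def strip_def by auto
  have "bij (\<lambda>(i, j, l). ((i, j), l) :: (nat \<times> nat) \<times> nat)"
    by (auto intro!: bijI injI simp: image_def)
  moreover have "(\<lambda>(i, j, l). g ((i, j), l)) = g \<circ> (\<lambda>(i, j, l). ((i, j), l))"
    by (auto simp: fun_eq_iff)
  ultimately have "bij_betw (\<lambda>(i, j, l). g ((i, j), l)) UNIV Q01"
    using bij_betw_trans[OF _ g] by metis
  moreover have "(\<lambda>(i, j, l). g ((i, j), l)) -` A \<in> BI" if "A \<in> conv" for A
    using conv_preimage_in_BI[OF bij_betw_imp_inj_on[OF g] g_box that] .
  ultimately show ?thesis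
    unfolding ideal_below_def Union_conv Union_BI by auto
qed

lemma BI_finitely_many_infinite_columns:
  assumes "A \<in> BI"
  shows "finite {(i, j). infinite {l. (i, j, l) \<in> A}}"
proof -
  obtain k where k1: "\<And>i. i < k \<Longrightarrow> {(j, l). (i, j, l) \<in> A} \<in> Fin2"
    and k2: "\<And>i. k \<le> i \<Longrightarrow> finite {(j, l). (i, j, l) \<in> A}"
    using BI_E[OF assms] by blast
  have "i < k" if "infinite {l. (i, j, l) \<in> A}" for i j
  proof (rule ccontr)
    assume "\<not> i < k"
    then have "finite (Pair j -` {(j, l). (i, j, l) \<in> A})"
      using k2 by (intro finite_vimageI) (auto simp: inj_def)
    then show False using that by simp
  qed
  then have "{(i, j). infinite {l. (i, j, l) \<in> A}} \<subseteq> (SIGMA i:{..<k}. {j. infinite {l. (i, j, l) \<in> A}})"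
    by auto
  moreover have "finite (SIGMA i:{..<k}. {j. infinite {l. (i, j, l) \<in> A}})"
    using k1 by (intro finite_SigmaI) (auto simp: Fin2_def)
  ultimately show ?thesis by (rule finite_subset)
qed

lemma BI_below_Fin2: "ideal_below BI Fin2"
proof -
  define g :: "nat \<times> nat \<Rightarrow> nat \<times> nat \<times> nat" where
    "g = (\<lambda>(n, l). (fst (prod_decode n), snd (prod_decode n), l))"
  have "bij g"
  proof (rule bijI)
    show "inj g"
    proof (rule injI)
      fix x y assume "g x = g y"
      then have "prod_decode (fst x) = prod_decode (fst y)" and "snd x = snd y"
        unfolding g_def by (auto simp: prod_eq_iff split: prod.splits)
      then show "x = y" by (metis injD[OF inj_prod_decode] prod_eq_iff)
    qed
    show "surj g"
    proof (rule surjI)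
      fix x :: "nat \<times> nat \<times> nat"
      show "g (prod_encode (fst x, fst (snd x)), snd (snd x)) = x" unfolding g_def by simp
    qed
  qed
  have "g -` A \<in> Fin2" if "A \<in> BI" for A
  proof -
    have "{n. infinite {l. (n, l) \<in> g -` A}} = prod_decode -` {(i, j). infinite {l. (i, j, l) \<in> A}}"
      unfolding g_def by (auto split: prod.splits)
    then show ?thesis unfolding Fin2_def
      using finite_vimageI[OF BI_finitely_many_infinite_columns[OF that] inj_prod_decode] by simp
  qed
  then show ?thesis unfolding ideal_below_def Union_BI Union_Fin2 using \<open>bij g\<close> by auto
qed

section \<open>Diagonal sets and the negative results\<close>

definition diagonal_set :: "(nat \<Rightarrow> nat \<Rightarrow> 'a) \<Rightarrow> 'a set" where
  "diagonal_set b = {b m t | m t. t \<le> m}"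

lemma finite_diagonal_set_level:
  assumes "\<And>m t. m \<le> level (b m t)"
  shows "finite {x \<in> diagonal_set b. level x \<le> N}"
proof -
  have "{x \<in> diagonal_set b. level x \<le> N} \<subseteq> (\<lambda>(m, t). b m t) ` ({..N} \<times> {..N})"
  proof
    fix x assume "x \<in> {x \<in> diagonal_set b. level x \<le> N}"
    then obtain m t where "x = b m t" and "t \<le> m" and "level x \<le> N"
      unfolding diagonal_set_def by blast
    moreover have "m \<le> N" using assms[of m t] calculation by simp
    ultimately show "x \<in> (\<lambda>(m, t). b m t) ` ({..N} \<times> {..N})" by force
  qed
  then show ?thesis by (rule finite_subset) simp
qed

lemma finite_section_diagonal_image:
  assumes "\<And>m t. m \<le> fst (f (b m t))"
  shows "finite {y. (n, y) \<in> f ` diagonal_set b}"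
proof -
  have "{y. (n, y) \<in> f ` diagonal_set b} \<subseteq> (\<lambda>x. snd (f x)) ` {x \<in> diagonal_set b. fst (f x) \<le> n}"
  proof
    fix y assume "y \<in> {y. (n, y) \<in> f ` diagonal_set b}"
    then obtain x where "x \<in> diagonal_set b" and "f x = (n, y)" by force
    then show "y \<in> (\<lambda>x. snd (f x)) ` {x \<in> diagonal_set b. fst (f x) \<le> n}"
      by (auto intro!: image_eqI[of _ _ x])
  qed
  then show ?thesis
    using finite_diagonal_set_level[of "\<lambda>x. fst (f x)", OF assms] by (meson finite_imageI finite_subset)
qed

lemma infinite_diagonal_set_Int:
  assumes "\<And>m. b m t \<in> T" and "\<And>m. m \<le> level (b m t)"
  shows "infinite (diagonal_set b \<inter> T)"
proof
  assume "finite (diagonal_set b \<inter> T)"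
  then obtain N where N: "\<And>x. x \<in> diagonal_set b \<inter> T \<Longrightarrow> level x < N"
    using finite_nat_bounded[of "level ` (diagonal_set b \<inter> T)"] by auto
  have "b (max N t) t \<in> diagonal_set b \<inter> T"
    unfolding diagonal_set_def using assms(1) max.cobounded2 by blast
  then show False using N assms(2)[of "max N t"] by fastforce
qed

lemma diagonal_set_not_conv:
  assumes "point_finite l h" and "\<And>t. T t \<subseteq> {l t..h t}"
    and "\<And>m t. b m t \<in> T t" and "\<And>m t. m \<le> level (b m t)"
  shows "diagonal_set b \<notin> conv"
proof
  assume "diagonal_set b \<in> conv"
  then have "finite {t. infinite (diagonal_set b \<inter> T t)}"
    by (rule conv_finitely_many_infinite_traces[OF _ assms(1,2)])
  moreover have "infinite (diagonal_set b \<inter> T t)" for t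
    by (rule infinite_diagonal_set_Int[OF assms(3,4)])
  ultimately show False by simp
qed

lemma conv_if_image_in_BI:
  assumes "\<forall>A\<in>BI. f -` A \<inter> Q01 \<in> conv" and "B \<subseteq> Q01" and "f ` B \<in> BI"
  shows "B \<in> conv"
proof -
  have "f -` f ` B \<inter> Q01 \<in> conv" using assms(1,3) by blast
  then show ?thesis by (rule conv_subset) (use assms(2) in blast)
qed

lemma diagonal_image_not_in_BI:
  fixes f :: "rat \<Rightarrow> nat \<times> nat \<times> nat"
  assumes f: "\<forall>A\<in>BI. f -` A \<inter> Q01 \<in> conv" and "0 \<le> c" and "c < d" and "d \<le> 1"
    and b: "\<And>m t. b m t \<in> cell c d t" and level: "\<And>m t. m \<le> level (b m t)"
  shows "f ` diagonal_set b \<notin> BI"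
proof
  assume "f ` diagonal_set b \<in> BI"
  moreover have "b m t \<in> Q01" for m t
    using b[of m t] cell_subset[OF \<open>c < d\<close>, of t] \<open>0 \<le> c\<close> \<open>d \<le> 1\<close>
    unfolding Q01_def by fastforce
  then have "diagonal_set b \<subseteq> Q01"
    unfolding diagonal_set_def by blast
  ultimately have "diagonal_set b \<in> conv" using conv_if_image_in_BI[OF f] by blast
  moreover have "diagonal_set b \<notin> conv"
    by (rule diagonal_set_not_conv[OF point_finite_cells[OF \<open>c < d\<close>] cell_subset_closed b level])
  ultimately show False by contradiction
qed

lemma initial_block_in_BI: "{x :: nat \<times> nat \<times> nat. fst x < n \<and> fst (snd x) < m} \<in> BI"
proof (rule BI_I[of n])
  fix i
  have "{j. infinite {l. (i, j, l) \<in> {x. fst x < n \<and> fst (snd x) < m}}} \<subseteq> {..<m}"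
    by auto
  then show "{(j, l). (i, j, l) \<in> {x. fst x < n \<and> fst (snd x) < m}} \<in> Fin2"
    unfolding Fin2_def by (auto intro: finite_subset)
qed auto

lemma diagonal_image_in_BI_first_level:
  fixes f :: "'a \<Rightarrow> nat \<times> nat \<times> nat"
  assumes "\<And>m t. m \<le> fst (f (b m t))"
  shows "f ` diagonal_set b \<in> BI"
proof (rule BI_I[of 0])
  show "finite {(j, l). (i, j, l) \<in> f ` diagonal_set b}" for i
    using finite_section_diagonal_image[of f b i, OF assms] by (simp add: split_def)
qed simp

lemma diagonal_image_in_BI_second_level:
  fixes f :: "'a \<Rightarrow> nat \<times> nat \<times> nat"
  assumes first: "\<And>m t. fst (f (b m t)) < n" and second: "\<And>m t. m \<le> fst (snd (f (b m t)))"
  shows "f ` diagonal_set b \<in> BI"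
proof (rule BI_I[of n])
  fix i
  show "{(j, l). (i, j, l) \<in> f ` diagonal_set b} \<in> Fin2"
  proof (rule Fin2I)
    fix j
    have "(j, l) \<in> (\<lambda>x. snd (f x)) ` diagonal_set b" if "(i, j, l) \<in> f ` diagonal_set b" for l
      using image_eqI[OF _ that, of "(j, l)" snd] by (simp add: image_image)
    then have "{l. (i, j, l) \<in> f ` diagonal_set b} \<subseteq> {l. (j, l) \<in> (\<lambda>x. snd (f x)) ` diagonal_set b}"
      by blast
    then show "finite {l. (j, l) \<in> {(j, l). (i, j, l) \<in> f ` diagonal_set b}}"
      using finite_section_diagonal_image[of "\<lambda>x. snd (f x)" b j, OF second]
      by (auto intro: finite_subset)
  qed
next
  fix i assume "n \<le> i"
  have "(i, y) \<notin> f ` diagonal_set b" for y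
  proof
    assume "(i, y) \<in> f ` diagonal_set b"
    then obtain m t where "f (b m t) = (i, y)" unfolding diagonal_set_def by force
    then show False using first[of m t] \<open>n \<le> i\<close> by simp
  qed
  then show "finite {(j, l). (i, j, l) \<in> f ` diagonal_set b}" by simp
qed

lemma second_coordinate_unbounded_on_interval:
  fixes f :: "rat \<Rightarrow> nat \<times> nat \<times> nat"
  assumes f: "\<forall>A\<in>BI. f -` A \<inter> Q01 \<in> conv" and "a < b"
    and bounded: "\<And>q. q \<in> {a<..b} \<Longrightarrow> q \<in> Q01 \<and> fst (f q) < n"
  shows "\<exists>q\<in>{a<..b}. m \<le> fst (snd (f q))"
proof -
  have "f -` {x. fst x < n \<and> fst (snd x) < m} \<inter> Q01 \<in> conv"
    using f initial_block_in_BI by blast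
  then obtain q where "q \<in> {a<..b}" and "q \<notin> f -` {x. fst x < n \<and> fst (snd x) < m} \<inter> Q01"
    using conv_avoids_interval[OF \<open>a < b\<close>] by blast
  then show ?thesis using bounded by force
qed

lemma first_coordinate_bounded_on_cell:
  fixes f :: "rat \<Rightarrow> nat \<times> nat \<times> nat"
  assumes f: "\<forall>A\<in>BI. f -` A \<inter> Q01 \<in> conv"
  obtains t n where "\<And>q. q \<in> cell 0 1 t \<Longrightarrow> fst (f q) < n"
proof (rule ccontr)
  assume "\<not> thesis"
  then have "\<exists>q. q \<in> cell 0 1 t \<and> m \<le> fst (f q)" for m t
    using that by (meson not_le)
  then have "\<exists>b. \<forall>m t. b m t \<in> cell 0 1 t \<and> m \<le> fst (f (b m t))"
    by (intro choice allI)
  then obtain b where b: "\<And>m t. b m t \<in> cell 0 1 t" and level: "\<And>m t. m \<le> fst (f (b m t))"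
    by blast
  show False
    using diagonal_image_not_in_BI[OF f _ zero_less_one _ b level]
      diagonal_image_in_BI_first_level[of f b, OF level] by simp
qed

lemma first_coordinate_not_bounded_on_cell:
  fixes f :: "rat \<Rightarrow> nat \<times> nat \<times> nat"
  assumes f: "\<forall>A\<in>BI. f -` A \<inter> Q01 \<in> conv"
    and bounded: "\<And>q. q \<in> cell 0 1 t \<Longrightarrow> fst (f q) < n"
  shows False
proof -
  define c d where "c = cell_lo 0 1 t" and "d = cell_hi 0 1 t"
  have "0 \<le> c" and "c < d" and "d \<le> 1"
    using cell_bounds[OF zero_less_one, of t] unfolding c_def d_def by auto
  have inside: "q \<in> Q01 \<and> fst (f q) < n" if "q \<in> {c<..d}" for q
    using that bounded \<open>0 \<le> c\<close> \<open>d \<le> 1\<close> unfolding c_def d_def cell_def Q01_def by force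
  have "\<exists>q. q \<in> cell c d s \<and> m \<le> fst (snd (f q))" for m s
    using second_coordinate_unbounded_on_interval[OF f cell_bounds(2)[OF \<open>c < d\<close>]]
      inside cell_subset[OF \<open>c < d\<close>, of s] unfolding cell_def by blast
  then have "\<exists>b. \<forall>m s. b m s \<in> cell c d s \<and> m \<le> fst (snd (f (b m s)))"
    by (intro choice allI)
  then obtain b where b: "\<And>m s. b m s \<in> cell c d s"
    and level: "\<And>m s. m \<le> fst (snd (f (b m s)))"
    by blast
  have "fst (f (b m s)) < n" for m s
    using inside b cell_subset[OF \<open>c < d\<close>] by blast
  then show False
    using diagonal_image_not_in_BI[OF f \<open>0 \<le> c\<close> \<open>c < d\<close> \<open>d \<le> 1\<close> b level]
      diagonal_image_in_BI_second_level[of f b n, OF _ level] by blast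
qed

lemma not_BI_below_conv: "\<not> ideal_below BI conv"
proof
  assume "ideal_below BI conv"
  then obtain f :: "rat \<Rightarrow> nat \<times> nat \<times> nat" where f: "\<forall>A\<in>BI. f -` A \<inter> Q01 \<in> conv"
    unfolding ideal_below_def Union_conv Union_BI by blast
  show False
  proof (rule first_coordinate_bounded_on_cell[OF f])
    fix t n assume "\<And>q. q \<in> cell 0 1 t \<Longrightarrow> fst (f q) < n"
    then show False by (rule first_coordinate_not_bounded_on_cell[OF f])
  qed
qed

lemma Fin2_pullback_rows_unbounded:
  assumes f: "\<And>A. A \<in> Fin2 \<Longrightarrow> f -` A \<in> BI"
  shows "\<exists>x. n \<le> fst (f (i, x))"
proof (rule ccontr)
  assume "\<nexists>x. n \<le> fst (f (i, x))"
  then have "fst (f (i, x)) < n" for x by (cases x) (simp add: not_le)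
  then have row: "{(j, l). (i, j, l) \<in> f -` {p. fst p < n}} = UNIV" by auto
  have "{m. infinite {l. (m, l) \<in> {p :: nat \<times> nat. fst p < n}}} \<subseteq> {..<n}" by auto
  then have "{p :: nat \<times> nat. fst p < n} \<in> Fin2"
    unfolding Fin2_def by (auto intro: finite_subset)
  then obtain k where k1: "\<And>i. i < k \<Longrightarrow> {(j, l). (i, j, l) \<in> f -` {p. fst p < n}} \<in> Fin2"
    and k2: "\<And>i. k \<le> i \<Longrightarrow> finite {(j, l). (i, j, l) \<in> f -` {p. fst p < n}}"
    using BI_E[OF f] by metis
  show False
  proof (cases "i < k")
    case True
    then show False using k1[OF True] UNIV_not_in_Fin2 unfolding row by blast
  next
    case False
    then show False using k2[of i] unfolding row by (simp add: finite_prod)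
  qed
qed

lemma not_Fin2_below_BI: "\<not> ideal_below Fin2 BI"
proof
  assume "ideal_below Fin2 BI"
  then obtain f :: "nat \<times> nat \<times> nat \<Rightarrow> nat \<times> nat" where f: "\<And>A. A \<in> Fin2 \<Longrightarrow> f -` A \<in> BI"
    unfolding ideal_below_def Union_BI Union_Fin2 by auto
  obtain p where "\<And>n i. n \<le> fst (f (i, p n i))"
    using Fin2_pullback_rows_unbounded[OF f] by metis
  define b where "b n i = (i, p n i)" for n i
  have level: "n \<le> fst (f (b n i))" for n i
    unfolding b_def by fact
  have "f ` diagonal_set b \<in> Fin2"
    using finite_section_diagonal_image[of f b, OF level] by (rule Fin2I)
  then obtain k where k: "finite {(j, l). (k, j, l) \<in> f -` f ` diagonal_set b}"
    using BI_E[OF f] by (metis order_refl)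
  have "diagonal_set b \<inter> {x. fst x = k} \<subseteq> Pair k ` {(j, l). (k, j, l) \<in> f -` f ` diagonal_set b}"
    by force
  then have "finite (diagonal_set b \<inter> {x. fst x = k})"
    using k by (meson finite_imageI finite_subset)
  moreover have "infinite (diagonal_set b \<inter> {x. fst x = k})"
    using level by (intro infinite_diagonal_set_Int[of b k _ "\<lambda>x. fst (f x)"]) (auto simp: b_def)
  ultimately show False by contradiction
qed

theorem proposition4p6:
  shows "ideal_below conv BI \<and> ideal_below BI Fin2 \<and>
         \<not> ideal_below BI conv \<and> \<not> ideal_below Fin2 BI"
  using conv_below_BI BI_below_Fin2 not_BI_below_conv not_Fin2_below_BI by blast

end
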